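(* There exists a sequence of natural numbers $B'_1,B'_2,B'_3,\dots$ such that for every finite set $\Omega$, every $A\subseteq\Omega$, and all natural numbers $n,k$, every exact $(n,k)$-cover of $(A,\Omega)$ with $n>B'_{|\Omega|}$ or $k>B'_{|\Omega|}$ is decomposable.
   Context: Let $\Omega$ be a finite set and $A\subseteq\Omega$. An exact $(n,k)$-cover of $(A,\Omega)$ is a finite multiset $C$ of subsets of $\Omega$ (repetitions allowed) such that every element of $A$ belongs to exactly $n+k$ members of $C$ (counted with multiplicity) and every element of $\Omega\setminus A$ belongs to exactly $k$ members of $C$. An exact $(n,k)$-cover $C$ of $(A,\Omega)$ is decomposable if $C$ can be partitioned (as a multiset) into two nonempty submultisets $C_1,C_2$ such that $C_1$ is an exact $(n_1,k_1)$-cover and $C_2$ is an exact $(n_2,k_2)$-cover of $(A,\Omega)$, with $n=n_1+n_2$ and $k=k_1+k_2$. *)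

theory Defs
  imports Main "HOL-Library.Multiset"
begin

definition cover_mult :: "'a set multiset \<Rightarrow> 'a \<Rightarrow> nat" where
  "cover_mult C x = size (filter_mset (\<lambda>S. x \<in> S) C)"

definition exact_cover :: "nat \<Rightarrow> nat \<Rightarrow> 'a set \<Rightarrow> 'a set \<Rightarrow> 'a set multiset \<Rightarrow> bool" where
  "exact_cover n k A \<Omega> C \<longleftrightarrow>
     (\<forall>S\<in>#C. S \<subseteq> \<Omega>) \<and>
     (\<forall>x\<in>A. cover_mult C x = n + k) \<and>
     (\<forall>x\<in>\<Omega> - A. cover_mult C x = k)"

definition decomposable :: "nat \<Rightarrow> nat \<Rightarrow> 'a set \<Rightarrow> 'a set \<Rightarrow> 'a set multiset \<Rightarrow> bool" where
  "decomposable n k A \<Omega> C \<longleftrightarrow>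
     (\<exists>C1 C2 n1 n2 k1 k2. C = C1 + C2 \<and> C1 \<noteq> {#} \<and> C2 \<noteq> {#} \<and>
        exact_cover n1 k1 A \<Omega> C1 \<and> exact_cover n2 k2 A \<Omega> C2 \<and>
        n = n1 + n2 \<and> k = k1 + k2)"

end

theory Submission
  imports Defs "HOL.Topological_Spaces"
begin

text \<open>
  If \<open>C\<^sub>0 \<subseteq># C\<^sub>1\<close> are exact covers with parameters
  \<open>(n\<^sub>0, k\<^sub>0) \<le> (n\<^sub>1, k\<^sub>1)\<close>, then \<open>C\<^sub>1 - C\<^sub>0\<close> is an exact \<open>(n\<^sub>1 - n\<^sub>0, k\<^sub>1 - k\<^sub>0)\<close>-cover, so an
  indecomposable \<open>C\<^sub>1\<close> admits no nonempty proper such \<open>C\<^sub>0\<close>. Recording a cover by the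
  finitely many numbers \<open>n\<close>, \<open>k\<close> and the multiplicities of the subsets of \<open>\<Omega>\<close>, the
  nonempty indecomposable covers therefore form an antichain for the pointwise order,
  which is finite by Dickson's lemma; hence their parameters are bounded. Exact covers
  are transported along bijections, so it suffices to bound the finitely many
  configurations \<open>A \<subseteq> {..<m}\<close>, and the maximum of these bounds only depends on \<open>m = card \<Omega>\<close>.
\<close>

lemma ex_mono_subseq_nat:
  fixes u :: "nat \<Rightarrow> nat"
  shows "\<exists>f :: nat \<Rightarrow> nat. strict_mono f \<and> mono (\<lambda>n. u (f n))"
proof -
  obtain f :: "nat \<Rightarrow> nat" where f: "strict_mono f" "monoseq (\<lambda>n. u (f n))"
    using seq_monosub by blast
  show ?thesis
  proof (cases "mono (\<lambda>n. u (f n))")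
    case True
    with f(1) show ?thesis by blast
  next
    case False
    with f(2) have dec: "decseq (\<lambda>n. u (f n))"
      by (simp add: monoseq_iff)
    obtain N where N: "\<And>n. u (f N) \<le> u (f n)"
      using ex_has_least_nat[where P="\<lambda>_. True" and m="\<lambda>n. u (f n)"] by blast
    have "u (f (n + N)) = u (f N)" for n
      using decseqD[OF dec, of N "n + N"] N[of "n + N"] by simp
    then have "mono (\<lambda>n. u (f (n + N)))"
      by (simp add: mono_def)
    moreover have "strict_mono (\<lambda>n. f (n + N))"
      using f(1) by (simp add: strict_mono_def)
    ultimately show ?thesis by blast
  qed
qed

lemma ex_subseq_pointwise_mono:
  fixes u :: "nat \<Rightarrow> 'i \<Rightarrow> nat"
  assumes "finite I"
  shows "\<exists>f :: nat \<Rightarrow> nat. strict_mono f \<and> (\<forall>i\<in>I. mono (\<lambda>n. u (f n) i))"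
  using assms
proof (induction I arbitrary: u rule: finite_induct)
  case empty
  show ?case by (rule exI[of _ id]) (simp add: strict_mono_def)
next
  case (insert i I)
  obtain f :: "nat \<Rightarrow> nat" where f: "strict_mono f" "\<forall>j\<in>I. mono (\<lambda>n. u (f n) j)"
    using insert.IH by blast
  obtain g :: "nat \<Rightarrow> nat" where g: "strict_mono g" "mono (\<lambda>n. u (f (g n)) i)"
    using ex_mono_subseq_nat[of "\<lambda>n. u (f n) i"] by blast
  have "mono (\<lambda>n. u (f (g n)) j)" if "j \<in> I" for j
    using f(2) that strict_mono_mono[OF g(1)] by (auto simp: mono_def)
  with g(2) have "\<forall>j\<in>insert i I. mono (\<lambda>n. u (f (g n)) j)"
    by simp
  moreover have "strict_mono (\<lambda>n. f (g n))"
    using f(1) g(1) by (simp add: strict_mono_def)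
  ultimately show ?case by blast
qed

lemma ex_less_pointwise_le:
  fixes u :: "nat \<Rightarrow> 'i \<Rightarrow> nat"
  assumes "finite I"
  shows "\<exists>m n. m < n \<and> (\<forall>i\<in>I. u m i \<le> u n i)"
proof -
  obtain f :: "nat \<Rightarrow> nat" where "strict_mono f" "\<forall>i\<in>I. mono (\<lambda>n. u (f n) i)"
    using ex_subseq_pointwise_mono[OF assms] by blast
  then have "f 0 < f 1" "\<forall>i\<in>I. u (f 0) i \<le> u (f 1) i"
    by (auto simp: strict_mono_def mono_def)
  then show ?thesis by blast
qed

lemma cover_mult_diff:
  assumes "C\<^sub>0 \<subseteq># C\<^sub>1"
  shows "cover_mult (C\<^sub>1 - C\<^sub>0) x = cover_mult C\<^sub>1 x - cover_mult C\<^sub>0 x"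
  unfolding cover_mult_def
  by (metis assms multiset_filter_mono size_Diff_submset filter_diff_mset)

lemma exact_cover_diff:
  assumes "exact_cover n\<^sub>0 k\<^sub>0 A \<Omega> C\<^sub>0" "exact_cover n\<^sub>1 k\<^sub>1 A \<Omega> C\<^sub>1"
    and "C\<^sub>0 \<subseteq># C\<^sub>1" "n\<^sub>0 \<le> n\<^sub>1" "k\<^sub>0 \<le> k\<^sub>1"
  shows "exact_cover (n\<^sub>1 - n\<^sub>0) (k\<^sub>1 - k\<^sub>0) A \<Omega> (C\<^sub>1 - C\<^sub>0)"
  using assms unfolding exact_cover_def cover_mult_diff[OF assms(3)]
  by (auto dest: in_diffD)

lemma subcover_of_indecomposable_eq:
  assumes "A \<noteq> {}" "exact_cover n\<^sub>0 k\<^sub>0 A \<Omega> C\<^sub>0" "exact_cover n\<^sub>1 k\<^sub>1 A \<Omega> C\<^sub>1"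
    and "\<not> decomposable n\<^sub>1 k\<^sub>1 A \<Omega> C\<^sub>1" "C\<^sub>0 \<noteq> {#}" "C\<^sub>0 \<subseteq># C\<^sub>1" "n\<^sub>0 \<le> n\<^sub>1" "k\<^sub>0 \<le> k\<^sub>1"
  shows "(n\<^sub>0, k\<^sub>0, C\<^sub>0) = (n\<^sub>1, k\<^sub>1, C\<^sub>1)"
proof (cases "C\<^sub>1 - C\<^sub>0 = {#}")
  case True
  then have "C\<^sub>1 \<subseteq># C\<^sub>0"
    by (simp add: Diff_eq_empty_iff_mset)
  with assms(6) have "C\<^sub>0 = C\<^sub>1"
    by (rule subset_mset.antisym)
  obtain a where "a \<in> A"
    using assms(1) by blast
  with assms(2,3) \<open>C\<^sub>0 = C\<^sub>1\<close> have "n\<^sub>0 + k\<^sub>0 = n\<^sub>1 + k\<^sub>1"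
    unfolding exact_cover_def by metis
  with \<open>C\<^sub>0 = C\<^sub>1\<close> assms(7,8) show ?thesis
    by simp
next
  case False
  have "C\<^sub>1 = C\<^sub>0 + (C\<^sub>1 - C\<^sub>0)" "n\<^sub>1 = n\<^sub>0 + (n\<^sub>1 - n\<^sub>0)" "k\<^sub>1 = k\<^sub>0 + (k\<^sub>1 - k\<^sub>0)"
    using assms(6-8) by (simp_all add: subset_mset.add_diff_inverse)
  with False assms(2,5) exact_cover_diff[OF assms(2,3,6-8)]
  have "decomposable n\<^sub>1 k\<^sub>1 A \<Omega> C\<^sub>1"
    unfolding decomposable_def by blast
  with assms(4) show ?thesis
    by blast
qed

lemma finite_indecomposable_covers:
  assumes "finite \<Omega>" "A \<noteq> {}"
  shows "finite {(n, k, C). exact_cover n k A \<Omega> C \<and> \<not> decomposable n k A \<Omega> C \<and> C \<noteq> {#}}"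
    (is "finite ?X")
proof (rule ccontr)
  assume "infinite ?X"
  then obtain s :: "nat \<Rightarrow> nat \<times> nat \<times> 'a set multiset" where s: "inj s" "range s \<subseteq> ?X"
    using infinite_countable_subset by blast
  define coord :: "nat \<times> nat \<times> 'a set multiset \<Rightarrow> 'a set option option \<Rightarrow> nat" where
    "coord = (\<lambda>(n, k, C) i. case i of None \<Rightarrow> n | Some None \<Rightarrow> k | Some (Some S) \<Rightarrow> count C S)"
  define I where "I = {None, Some None} \<union> Some ` Some ` Pow \<Omega>"
  have "finite I"
    using assms(1) by (simp add: I_def)
  then obtain m m' where "m < m'" and le: "\<And>i. i \<in> I \<Longrightarrow> coord (s m) i \<le> coord (s m') i"
    using ex_less_pointwise_le[of I "\<lambda>m. coord (s m)"] by blast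
  obtain n\<^sub>0 k\<^sub>0 C\<^sub>0 n\<^sub>1 k\<^sub>1 C\<^sub>1 where s_m: "s m = (n\<^sub>0, k\<^sub>0, C\<^sub>0)" and s_m': "s m' = (n\<^sub>1, k\<^sub>1, C\<^sub>1)"
    by (metis prod_cases3)
  have "s m \<in> ?X" "s m' \<in> ?X"
    using range_subsetD[OF s(2)] by this+
  then have X: "(n\<^sub>0, k\<^sub>0, C\<^sub>0) \<in> ?X" "(n\<^sub>1, k\<^sub>1, C\<^sub>1) \<in> ?X"
    by (simp_all only: s_m s_m')
  have "n\<^sub>0 \<le> n\<^sub>1" "k\<^sub>0 \<le> k\<^sub>1"
    using le[of None] le[of "Some None"] by (simp_all add: I_def coord_def s_m s_m')
  moreover have "C\<^sub>0 \<subseteq># C\<^sub>1"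
  proof (rule mset_subset_eqI)
    fix S
    show "count C\<^sub>0 S \<le> count C\<^sub>1 S"
    proof (cases "S \<subseteq> \<Omega>")
      case True
      then show ?thesis
        using le[of "Some (Some S)"] by (simp add: I_def coord_def s_m s_m')
    next
      case False
      then have "S \<notin># C\<^sub>0"
        using X(1) by (auto simp: exact_cover_def)
      then show ?thesis
        by (simp add: not_in_iff)
    qed
  qed
  ultimately have "(n\<^sub>0, k\<^sub>0, C\<^sub>0) = (n\<^sub>1, k\<^sub>1, C\<^sub>1)"
    using X by (intro subcover_of_indecomposable_eq[OF assms(2)]) auto
  then have "s m = s m'"
    by (simp only: s_m s_m')
  with s(1) \<open>m < m'\<close> show False
    by (simp add: inj_eq)
qed

lemma indecomposable_covers_bounded:
  assumes "finite \<Omega>" "A \<noteq> {}"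
  shows "\<exists>b. \<forall>n k C. exact_cover n k A \<Omega> C \<longrightarrow> \<not> decomposable n k A \<Omega> C \<longrightarrow> n \<le> b \<and> k \<le> b"
proof -
  define X where "X = {(n, k, C). exact_cover n k A \<Omega> C \<and> \<not> decomposable n k A \<Omega> C \<and> C \<noteq> {#}}"
  define N where "N = fst ` X \<union> (fst \<circ> snd) ` X"
  have "finite N"
    using finite_indecomposable_covers[OF assms] by (simp add: N_def X_def)
  then obtain b where b: "\<forall>x\<in>N. x \<le> b"
    by (auto simp: finite_nat_set_iff_bounded_le)
  have "n \<le> b \<and> k \<le> b" if "exact_cover n k A \<Omega> C" "\<not> decomposable n k A \<Omega> C" for n k C
  proof (cases "C = {#}")
    case True
    obtain a where "a \<in> A"
      using assms(2) by blast
    with that(1) True show ?thesis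
      by (auto simp: exact_cover_def cover_mult_def)
  next
    case False
    with that have "(n, k, C) \<in> X"
      by (simp add: X_def)
    then have "n \<in> N" "k \<in> N"
      unfolding N_def by force+
    with b show ?thesis
      by blast
  qed
  then show ?thesis
    by blast
qed

definition indecomposable_bound :: "'a set \<Rightarrow> 'a set \<Rightarrow> nat" where
  "indecomposable_bound A \<Omega> =
     (SOME b. \<forall>n k C. exact_cover n k A \<Omega> C \<longrightarrow> \<not> decomposable n k A \<Omega> C \<longrightarrow> n \<le> b \<and> k \<le> b)"

lemma le_indecomposable_bound:
  assumes "finite \<Omega>" "A \<noteq> {}" "exact_cover n k A \<Omega> C" "\<not> decomposable n k A \<Omega> C"
  shows "n \<le> indecomposable_bound A \<Omega> \<and> k \<le> indecomposable_bound A \<Omega>"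
  using someI_ex[OF indecomposable_covers_bounded[OF assms(1,2)]] assms(3,4)
  unfolding indecomposable_bound_def by blast

lemma cover_mult_image_mset:
  assumes "inj_on h \<Omega>" "\<forall>S\<in>#C. S \<subseteq> \<Omega>" "x \<in> \<Omega>"
  shows "cover_mult (image_mset (image h) C) (h x) = cover_mult C x"
proof -
  have "filter_mset (\<lambda>S. h x \<in> h ` S) C = filter_mset (\<lambda>S. x \<in> S) C"
    using assms by (intro filter_mset_cong) (auto simp: inj_on_image_mem_iff)
  then show ?thesis
    by (simp add: cover_mult_def filter_mset_image_mset)
qed

lemma exact_cover_image_mset:
  assumes "bij_betw h \<Omega> Y" "A \<subseteq> \<Omega>" "exact_cover n k A \<Omega> C"
  shows "exact_cover n k (h ` A) Y (image_mset (image h) C)"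
proof -
  have inj: "inj_on h \<Omega>" and Y: "Y = h ` \<Omega>"
    using assms(1) by (auto simp: bij_betw_def)
  have sub: "\<forall>S\<in>#C. S \<subseteq> \<Omega>"
    using assms(3) by (simp add: exact_cover_def)
  have mult: "cover_mult (image_mset (image h) C) (h x) = (if x \<in> A then n + k else k)" if "x \<in> \<Omega>" for x
    using cover_mult_image_mset[OF inj sub that] assms(3) that by (simp add: exact_cover_def)
  have "\<forall>T\<in>#image_mset (image h) C. T \<subseteq> Y"
    using sub by (auto simp: Y)
  moreover have "\<forall>y\<in>h ` A. cover_mult (image_mset (image h) C) y = n + k"
    using mult assms(2) by auto
  moreover have "Y - h ` A = h ` (\<Omega> - A)"
    using inj assms(2) by (simp add: Y inj_on_image_set_diff)
  then have "\<forall>y\<in>Y - h ` A. cover_mult (image_mset (image h) C) y = k"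
    using mult by auto
  ultimately show ?thesis
    by (simp add: exact_cover_def)
qed

lemma decomposable_of_image_mset:
  assumes "bij_betw h \<Omega> Y" "A \<subseteq> \<Omega>" "exact_cover n k A \<Omega> C"
    and "decomposable n k (h ` A) Y (image_mset (image h) C)"
  shows "decomposable n k A \<Omega> C"
proof -
  define g where "g = inv_into \<Omega> h"
  have g: "bij_betw g Y \<Omega>"
    unfolding g_def using assms(1) by (rule bij_betw_inv_into)
  have inj: "inj_on h \<Omega>" and hA: "h ` A \<subseteq> Y"
    using assms(1,2) by (auto simp: bij_betw_def)
  have gA: "g ` h ` A = A"
    using inj assms(2) by (simp add: g_def)
  have "image g (image h S) = S" if "S \<in># C" for S
    using assms(3) that inj by (auto simp: g_def exact_cover_def subset_eq)
  then have gC: "image_mset (image g) (image_mset (image h) C) = C"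
    by (simp add: multiset.map_comp cong: image_mset_cong)
  obtain C\<^sub>1 C\<^sub>2 n\<^sub>1 n\<^sub>2 k\<^sub>1 k\<^sub>2 where
    dec: "image_mset (image h) C = C\<^sub>1 + C\<^sub>2" "C\<^sub>1 \<noteq> {#}" "C\<^sub>2 \<noteq> {#}"
      "exact_cover n\<^sub>1 k\<^sub>1 (h ` A) Y C\<^sub>1" "exact_cover n\<^sub>2 k\<^sub>2 (h ` A) Y C\<^sub>2" "n = n\<^sub>1 + n\<^sub>2" "k = k\<^sub>1 + k\<^sub>2"
    using assms(4) unfolding decomposable_def by blast
  from gC dec(1) have "C = image_mset (image g) C\<^sub>1 + image_mset (image g) C\<^sub>2"
    by simp
  with dec(2-7) exact_cover_image_mset[OF g hA dec(4)] exact_cover_image_mset[OF g hA dec(5)]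
  show ?thesis
    unfolding decomposable_def gA
    by (intro exI[of _ "image_mset (image g) C\<^sub>1"] exI[of _ "image_mset (image g) C\<^sub>2"]
        exI[of _ n\<^sub>1] exI[of _ n\<^sub>2] exI[of _ k\<^sub>1] exI[of _ k\<^sub>2]) simp
qed

definition indecomposable_bound_card :: "nat \<Rightarrow> nat" where
  "indecomposable_bound_card m = Max ((\<lambda>A. indecomposable_bound A {..<m}) ` Pow {..<m})"

lemma indecomposable_bound_le_card:
  "A \<subseteq> {..<m} \<Longrightarrow> indecomposable_bound A {..<m} \<le> indecomposable_bound_card m"
  unfolding indecomposable_bound_card_def by (intro Max_ge) auto

theorem mainTheorem4:
  "\<exists>B :: nat \<Rightarrow> nat. \<forall>(\<Omega> :: 'a set) A n k C.
      finite \<Omega> \<longrightarrow> A \<subseteq> \<Omega> \<longrightarrow> A \<noteq> {} \<longrightarrow> exact_cover n k A \<Omega> C \<longrightarrow>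
      (n > B (card \<Omega>) \<or> k > B (card \<Omega>)) \<longrightarrow> decomposable n k A \<Omega> C"
proof (intro exI[of _ indecomposable_bound_card] allI impI)
  fix \<Omega> :: "'a set" and A n k C
  assume "finite \<Omega>" "A \<subseteq> \<Omega>" "A \<noteq> {}" "exact_cover n k A \<Omega> C"
    and big: "n > indecomposable_bound_card (card \<Omega>) \<or> k > indecomposable_bound_card (card \<Omega>)"
  obtain h where h: "bij_betw h \<Omega> {..<card \<Omega>}"
    using ex_bij_betw_finite_nat[OF \<open>finite \<Omega>\<close>] unfolding atLeast0LessThan by blast
  have "exact_cover n k (h ` A) {..<card \<Omega>} (image_mset (image h) C)"
    using exact_cover_image_mset[OF h \<open>A \<subseteq> \<Omega>\<close> \<open>exact_cover n k A \<Omega> C\<close>] .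
  moreover have "indecomposable_bound (h ` A) {..<card \<Omega>} \<le> indecomposable_bound_card (card \<Omega>)"
    using h \<open>A \<subseteq> \<Omega>\<close> by (intro indecomposable_bound_le_card) (auto simp: bij_betw_def)
  ultimately have "decomposable n k (h ` A) {..<card \<Omega>} (image_mset (image h) C)"
    using big le_indecomposable_bound[of "{..<card \<Omega>}" "h ` A"] \<open>A \<noteq> {}\<close> by fastforce
  then show "decomposable n k A \<Omega> C"
    by (rule decomposable_of_image_mset[OF h \<open>A \<subseteq> \<Omega>\<close> \<open>exact_cover n k A \<Omega> C\<close>])
qed

end
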